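(* Let $R$ be a commutative ring with $\mathrm{Spec}(R)\neq\emptyset$, and let $M=\bigoplus_{\alpha\in\mathcal A}e_\alpha R$ be a free $R$-module with an infinite basis $\{e_\alpha\}_{\alpha\in\mathcal A}$. Then $\mathrm{Spec}_R(M)$, with the topology induced by the hull-kernel topology of $\mathrm{SMod}(M|R)$, is not quasi-compact (and hence not spectral).
   Context: $\mathrm{SMod}(M|R)$ is the set of $R$-submodules of $M$; the hull-kernel topology on it has as subbasis of closed sets the sets $\boldsymbol V(x_1,\dots,x_m):=\{N\mid x_1,\dots,x_m\in N\}$ for finite $\{x_1,\dots,x_m\}\subseteq M$. A prime submodule of $M$ is a submodule $P\neq M$ such that whenever $am\in P$ with $a\in R$, $m\in M$, then $m\in P$ or $aM\subseteq P$; $\mathrm{Spec}_R(M)$ is the set of prime submodules of $M$. *)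

theory Defs
  imports "HOL-Analysis.Analysis"
begin

definition prime_ideal_r :: "'r::comm_ring_1 set \<Rightarrow> bool" where
  "prime_ideal_r I \<longleftrightarrow> 0 \<in> I \<and> (\<forall>x\<in>I. \<forall>y\<in>I. x + y \<in> I) \<and> (\<forall>r. \<forall>x\<in>I. r * x \<in> I)
     \<and> I \<noteq> UNIV \<and> (\<forall>a b. a * b \<in> I \<longrightarrow> a \<in> I \<or> b \<in> I)"

text \<open>The free R-module with basis indexed by the type 'a: finitely supported functions.\<close>
definition free_mod :: "('a \<Rightarrow> 'r::comm_ring_1) set" where
  "free_mod = {f. finite {\<alpha>. f \<alpha> \<noteq> 0}}"

definition mod_smult :: "'r::comm_ring_1 \<Rightarrow> ('a \<Rightarrow> 'r) \<Rightarrow> ('a \<Rightarrow> 'r)" where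
  "mod_smult a f = (\<lambda>\<alpha>. a * f \<alpha>)"

definition is_submodule :: "('a \<Rightarrow> 'r::comm_ring_1) set \<Rightarrow> bool" where
  "is_submodule N \<longleftrightarrow> N \<subseteq> free_mod \<and> (\<lambda>_. 0) \<in> N
     \<and> (\<forall>x\<in>N. \<forall>y\<in>N. (\<lambda>\<alpha>. x \<alpha> + y \<alpha>) \<in> N) \<and> (\<forall>a. \<forall>x\<in>N. mod_smult a x \<in> N)"

definition SMod :: "('a \<Rightarrow> 'r::comm_ring_1) set set" where
  "SMod = {N. is_submodule N}"

definition V_sub :: "('a \<Rightarrow> 'r::comm_ring_1) set \<Rightarrow> ('a \<Rightarrow> 'r) set set" where
  "V_sub F = {N \<in> SMod. F \<subseteq> N}"

text \<open>Hull-kernel topology: the closed sets are generated by the V(F), F finite; equivalently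
  the open sets are generated by the complements SMod - V(F) together with SMod itself.\<close>
definition hull_kernel_topology :: "('a \<Rightarrow> 'r::comm_ring_1) set topology" where
  "hull_kernel_topology = topology_generated_by
     (insert SMod {SMod - V_sub F | F. finite F \<and> F \<subseteq> free_mod})"

definition prime_submodule :: "('a \<Rightarrow> 'r::comm_ring_1) set \<Rightarrow> bool" where
  "prime_submodule P \<longleftrightarrow> is_submodule P \<and> P \<noteq> free_mod \<and>
     (\<forall>a. \<forall>m\<in>free_mod. mod_smult a m \<in> P \<longrightarrow> m \<in> P \<or> (\<forall>m'\<in>free_mod. mod_smult a m' \<in> P))"

definition Spec_mod :: "('a \<Rightarrow> 'r::comm_ring_1) set set" where
  "Spec_mod = {P. prime_submodule P}"

end

theory Submission
  imports Defs
begin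

text \<open>Every prime submodule \<open>P\<close> misses some basis vector \<open>e\<^sub>\<alpha>\<close>, since the basis vectors span
  \<open>M \<noteq> P\<close>. Hence the basic open sets \<open>SMod - V(e\<^sub>\<alpha>)\<close> cover \<open>Spec\<^sub>R(M)\<close>. No finitely many of
  them do: given finitely many indices and an index \<open>\<beta>\<close> outside them, the submodule of all \<open>f\<close>
  with \<open>f \<beta>\<close> in a fixed prime ideal \<open>p\<close> of \<open>R\<close> is prime and contains each of the finitely many
  \<open>e\<^sub>\<alpha>\<close>.\<close>

definition basis_vec :: "'a \<Rightarrow> ('a \<Rightarrow> 'r::comm_ring_1)" where
  "basis_vec \<alpha> = (\<lambda>\<beta>. if \<beta> = \<alpha> then 1 else 0)"

lemma zero_in_free_mod: "(\<lambda>_. 0) \<in> free_mod"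
  unfolding free_mod_def by simp

lemma free_mod_add:
  assumes "x \<in> free_mod" "y \<in> free_mod"
  shows "(\<lambda>\<alpha>. x \<alpha> + y \<alpha>) \<in> free_mod"
proof -
  have "{\<alpha>. x \<alpha> + y \<alpha> \<noteq> 0} \<subseteq> {\<alpha>. x \<alpha> \<noteq> 0} \<union> {\<alpha>. y \<alpha> \<noteq> 0}" by auto
  then show ?thesis using assms unfolding free_mod_def by (auto intro: finite_subset)
qed

lemma free_mod_smult:
  assumes "x \<in> free_mod"
  shows "mod_smult a x \<in> free_mod"
proof -
  have "{\<alpha>. a * x \<alpha> \<noteq> 0} \<subseteq> {\<alpha>. x \<alpha> \<noteq> 0}" by auto
  then show ?thesis using assms unfolding free_mod_def mod_smult_def by (auto intro: finite_subset)
qed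

lemma basis_vec_in_free_mod: "basis_vec \<alpha> \<in> free_mod"
proof -
  have "{\<beta>. basis_vec \<alpha> \<beta> \<noteq> 0} \<subseteq> {\<alpha>}" by (auto simp: basis_vec_def)
  then show ?thesis unfolding free_mod_def by (auto intro: finite_subset)
qed

lemma submodule_contains_finite_support:
  fixes N :: "('a \<Rightarrow> 'r::comm_ring_1) set"
  assumes N: "is_submodule N" and basis: "\<And>\<alpha>. basis_vec \<alpha> \<in> N"
    and "finite A" and "{\<alpha>. f \<alpha> \<noteq> 0} \<subseteq> A"
  shows "f \<in> N"
  using assms(3,4)
proof (induction A arbitrary: f)
  case empty
  then have "f = (\<lambda>_. 0)" by auto
  then show ?case using N unfolding is_submodule_def by simp
next
  case (insert \<alpha> A f)
  have "{\<beta>. (f(\<alpha> := 0)) \<beta> \<noteq> 0} \<subseteq> A" using insert.prems by auto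
  then have rest: "f(\<alpha> := 0) \<in> N" by (rule insert.IH)
  have coord: "mod_smult (f \<alpha>) (basis_vec \<alpha>) \<in> N" using N basis unfolding is_submodule_def by blast
  have "f = (\<lambda>\<beta>. (f(\<alpha> := 0)) \<beta> + mod_smult (f \<alpha>) (basis_vec \<alpha>) \<beta>)"
    by (auto simp: mod_smult_def basis_vec_def)
  then show ?case using N rest coord unfolding is_submodule_def by metis
qed

lemma submodule_eq_free_mod_if_basis:
  assumes N: "is_submodule N" and basis: "\<And>\<alpha>. basis_vec \<alpha> \<in> N"
  shows "N = free_mod"
proof
  show "free_mod \<subseteq> N"
    using submodule_contains_finite_support[OF N basis] unfolding free_mod_def by blast
  show "N \<subseteq> free_mod" using N unfolding is_submodule_def by blast
qed

lemma prime_submodule_misses_basis_vec: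
  assumes "prime_submodule P"
  obtains \<alpha> where "basis_vec \<alpha> \<notin> P"
  using assms submodule_eq_free_mod_if_basis unfolding prime_submodule_def by blast

lemma prime_ideal_rD:
  assumes "prime_ideal_r p"
  shows prime_ideal_r_zero: "0 \<in> p"
    and prime_ideal_r_add: "x \<in> p \<Longrightarrow> y \<in> p \<Longrightarrow> x + y \<in> p"
    and prime_ideal_r_mult_left: "x \<in> p \<Longrightarrow> r * x \<in> p"
    and prime_ideal_r_prime: "a * b \<in> p \<Longrightarrow> a \<in> p \<or> b \<in> p"
  using assms unfolding prime_ideal_r_def by blast+

lemma prime_ideal_r_mult_right: "prime_ideal_r p \<Longrightarrow> x \<in> p \<Longrightarrow> x * r \<in> p"
  using prime_ideal_r_mult_left[of p x r] by (simp add: mult.commute)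

lemma one_notin_prime_ideal_r:
  assumes "prime_ideal_r p"
  shows "1 \<notin> p"
proof
  assume "1 \<in> p"
  then have "r \<in> p" for r using prime_ideal_r_mult_left[OF assms, of 1 r] by simp
  then show False using assms unfolding prime_ideal_r_def by blast
qed

lemma is_submodule_coordinate_preimage:
  fixes p :: "'r::comm_ring_1 set" and \<beta> :: 'a
  assumes p: "prime_ideal_r p"
  shows "is_submodule {f \<in> free_mod. f \<beta> \<in> p}" (is "is_submodule ?P")
  unfolding is_submodule_def
proof (intro conjI ballI allI)
  show "?P \<subseteq> free_mod" by blast
  show "(\<lambda>_. 0) \<in> ?P"
    using zero_in_free_mod prime_ideal_r_zero[OF p] by simp
  show "(\<lambda>\<alpha>. x \<alpha> + y \<alpha>) \<in> ?P" if "x \<in> ?P" "y \<in> ?P" for x y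
    using that free_mod_add[of x y] prime_ideal_r_add[OF p, of "x \<beta>" "y \<beta>"] by simp
  show "mod_smult a x \<in> ?P" if "x \<in> ?P" for a x
    using that free_mod_smult[of x a] prime_ideal_r_mult_left[OF p, of "x \<beta>" a]
    by (simp add: mod_smult_def)
qed

lemma prime_submodule_coordinate_preimage:
  fixes p :: "'r::comm_ring_1 set" and \<beta> :: 'a
  assumes p: "prime_ideal_r p"
  shows "prime_submodule {f \<in> free_mod. f \<beta> \<in> p}" (is "prime_submodule ?P")
proof -
  have "basis_vec \<beta> \<notin> ?P"
    using one_notin_prime_ideal_r[OF p] by (simp add: basis_vec_def)
  then have proper: "?P \<noteq> free_mod"
    using basis_vec_in_free_mod[of \<beta>] by auto
  have prime: "m \<in> ?P \<or> (\<forall>m'\<in>free_mod. mod_smult a m' \<in> ?P)"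
    if m: "m \<in> free_mod" and am: "mod_smult a m \<in> ?P" for a m
  proof -
    have "a * m \<beta> \<in> p" using am by (simp add: mod_smult_def)
    then consider "a \<in> p" | "m \<beta> \<in> p" using prime_ideal_r_prime[OF p] by blast
    then show ?thesis
    proof cases
      case 1
      have "mod_smult a m' \<in> ?P" if "m' \<in> free_mod" for m'
      proof -
        have "a * m' \<beta> \<in> p" using prime_ideal_r_mult_right[OF p 1] .
        then show ?thesis using free_mod_smult[OF that] by (simp add: mod_smult_def)
      qed
      then show ?thesis by blast
    next
      case 2
      then show ?thesis using m by blast
    qed
  qed
  show ?thesis
    unfolding prime_submodule_def
    using is_submodule_coordinate_preimage[OF p] proper prime by (intro conjI allI ballI impI)
qed

lemma topspace_hull_kernel_topology: "topspace hull_kernel_topology = SMod"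
  unfolding hull_kernel_topology_def by auto

lemma openin_hull_kernel_topology_basic:
  assumes "finite F" "F \<subseteq> free_mod"
  shows "openin hull_kernel_topology (SMod - V_sub F)"
  unfolding hull_kernel_topology_def using assms by (auto intro: topology_generated_by_Basis)

lemma Spec_mod_subset_SMod: "Spec_mod \<subseteq> SMod"
  unfolding Spec_mod_def SMod_def prime_submodule_def by auto

lemma compact_Spec_mod_imp_finite_basis_cover:
  assumes "compact_space (subtopology (hull_kernel_topology :: ('a \<Rightarrow> 'r::comm_ring_1) set topology) Spec_mod)"
  shows "\<exists>A. finite A \<and> (\<forall>P \<in> (Spec_mod :: ('a \<Rightarrow> 'r) set set). \<exists>\<alpha>\<in>A. basis_vec \<alpha> \<notin> P)"
proof -
  let ?D = "\<lambda>\<alpha>::'a. SMod - V_sub {basis_vec \<alpha> :: 'a \<Rightarrow> 'r}"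
  have "SMod \<inter> Spec_mod = (Spec_mod :: ('a \<Rightarrow> 'r) set set)"
    using Spec_mod_subset_SMod by blast
  then have "compactin hull_kernel_topology (Spec_mod :: ('a \<Rightarrow> 'r) set set)"
    using assms
    by (simp add: compact_space_def compactin_subtopology topspace_hull_kernel_topology)
  moreover have "\<forall>U\<in>range ?D. openin hull_kernel_topology U"
    by (auto intro!: openin_hull_kernel_topology_basic basis_vec_in_free_mod)
  moreover have "Spec_mod \<subseteq> \<Union>(range ?D)"
  proof
    fix P :: "('a \<Rightarrow> 'r) set"
    assume P: "P \<in> Spec_mod"
    then obtain \<alpha> where "basis_vec \<alpha> \<notin> P"
      using prime_submodule_misses_basis_vec unfolding Spec_mod_def by blast
    then show "P \<in> \<Union>(range ?D)" using P Spec_mod_subset_SMod unfolding V_sub_def by blast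
  qed
  ultimately obtain \<F> where "finite \<F>" "\<F> \<subseteq> range ?D" "Spec_mod \<subseteq> \<Union>\<F>"
    unfolding compactin_def by metis
  then obtain A where "finite A" "Spec_mod \<subseteq> \<Union>(?D ` A)"
    by (metis finite_subset_image)
  then show ?thesis unfolding V_sub_def by blast
qed

theorem mainTheorem7:
  assumes "infinite (UNIV :: 'a set)"
    and "\<exists>P :: 'r::comm_ring_1 set. prime_ideal_r P"
  shows "\<not> compact_space (subtopology (hull_kernel_topology :: ('a \<Rightarrow> 'r) set topology) Spec_mod)"
proof
  assume "compact_space (subtopology (hull_kernel_topology :: ('a \<Rightarrow> 'r) set topology) Spec_mod)"
  then obtain A :: "'a set" where A: "finite A"
    and misses: "\<forall>P \<in> (Spec_mod :: ('a \<Rightarrow> 'r) set set). \<exists>\<alpha>\<in>A. basis_vec \<alpha> \<notin> P"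
    using compact_Spec_mod_imp_finite_basis_cover by blast
  obtain p :: "'r set" where p: "prime_ideal_r p" using assms(2) by blast
  obtain \<beta> where "\<beta> \<notin> A" using A assms(1) by (meson ex_new_if_finite)
  then have "basis_vec \<alpha> \<in> {f \<in> free_mod. f \<beta> \<in> p}" if "\<alpha> \<in> A" for \<alpha>
    using that basis_vec_in_free_mod[of \<alpha>] prime_ideal_r_zero[OF p]
    by (auto simp: basis_vec_def)
  moreover have "{f \<in> free_mod. f \<beta> \<in> p} \<in> Spec_mod"
    using prime_submodule_coordinate_preimage[OF p] unfolding Spec_mod_def by simp
  ultimately show False using misses by blast
qed

end
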